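(* Let $p\in[2,\infty)$ and let $c_1(p),c_2(p)$ be positive constants such that for every real-valued martingale $(\zeta_j)_{j=0}^n$ with $\zeta_0=0$ and differences $\xi_i:=\zeta_i-\zeta_{i-1}$, \[ \mathsf{E}|\zeta_n|^p\le c_1(p)\sum_{i=1}^n\mathsf{E}|\xi_i|^p+c_2(p)\Big(\sum_{i=1}^n\big\|\mathsf{E}_{i-1}\xi_i^2\big\|_\infty\Big)^{p/2}, \] where $\mathsf{E}_j$ denotes conditional expectation given $\zeta_0,\dots,\zeta_j$. Let $X_1,\dots,X_n$ be independent random vectors in a Banach space $(\mathfrak{X},\|\cdot\|)$, let $Y:=\|X_1+\dots+X_n\|$, and suppose $Y$ has a finite mean. For each $i\in\{1,\dots,n\}$ take any $x_i,y_i\in\mathfrak{X}$. Then \[ \mathsf{E}|Y-\mathsf{E}Y|^p\le C_p\,c_1(p)\sum_{i=1}^n\mathsf{E}\|X_i-x_i\|^p+c_2(p)\Big(\sum_{i=1}^n\mathsf{E}\|X_i-y_i\|^2\Big)^{p/2}, \] where $C_p:=\max_{b\in[0,1]}\big(b^{p-1}+(1-b)^{p-1}\big)\big(b^{\frac1{p-1}}+(1-b)^{\frac1{p-1}}\big)^{p-1}$.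
   Context: $C_p$ as defined in the claim equals the best constant $C$ in $\mathsf{E}|X-\mathsf{E}X|^p\le C\,\mathsf{E}|X|^p$ over all real random variables $X$ with finite mean. The random vectors are assumed measurable so that $Y$ is a random variable (the paper works in a separable Banach space setting). *)

theory Defs
  imports "HOL-Probability.Probability"
begin

definition enn_powr :: "ennreal \<Rightarrow> real \<Rightarrow> ennreal" where
  "enn_powr a q = (if a = \<infinity> then \<infinity> else ennreal (enn2real a powr q))"

definition natural_filtration :: "'a measure \<Rightarrow> (nat \<Rightarrow> 'a \<Rightarrow> real) \<Rightarrow> nat \<Rightarrow> 'a measure" where
  "natural_filtration N \<zeta> j =
     sigma (space N) {\<zeta> i -` A \<inter> space N | i A. i \<le> j \<and> A \<in> sets borel}"

definition real_martingale :: "'a measure \<Rightarrow> nat \<Rightarrow> (nat \<Rightarrow> 'a \<Rightarrow> real) \<Rightarrow> bool" where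
  "real_martingale N m \<zeta> \<longleftrightarrow>
     (\<forall>j\<le>m. \<zeta> j \<in> borel_measurable N \<and> integrable N (\<zeta> j)) \<and>
     (\<forall>j\<in>{1..m}. AE x in N. real_cond_exp N (natural_filtration N \<zeta> (j - 1)) (\<zeta> j) x = \<zeta> (j - 1) x)"

definition C_const :: "real \<Rightarrow> real" where
  "C_const p = (SUP b\<in>{0..1::real}.
      (b powr (p - 1) + (1 - b) powr (p - 1)) *
      (b powr (1 / (p - 1)) + (1 - b) powr (1 / (p - 1))) powr (p - 1))"

end

theory Submission
  imports Defs
begin

text \<open>Let \<open>\<zeta>\<^sub>k = E(Y | X\<^sub>1, \<dots>, X\<^sub>k) - E Y\<close> be the Doob martingale of \<open>Y = \<parallel>X\<^sub>1 + \<dots> + X\<^sub>n\<parallel>\<close>;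
  it starts at 0 and ends at \<open>Y - E Y\<close>, so the assumed martingale inequality applies to it.
  By independence \<open>\<zeta>\<^sub>k = \<phi>\<^sub>k(X\<^sub>1 + \<dots> + X\<^sub>k) - E Y\<close> with the 1-Lipschitz function
  \<open>\<phi>\<^sub>k(t) = E\<parallel>t + X\<^sub>k\<^sub>+\<^sub>1 + \<dots> + X\<^sub>n\<parallel>\<close>, and given the past, the increment \<open>\<zeta>\<^sub>k\<^sub>+\<^sub>1 - \<zeta>\<^sub>k\<close> is the
  centred version of \<open>Z = \<phi>\<^sub>k\<^sub>+\<^sub>1(t + X\<^sub>k\<^sub>+\<^sub>1) - \<phi>\<^sub>k\<^sub>+\<^sub>1(t + x\<^sub>k\<^sub>+\<^sub>1)\<close>, where \<open>|Z| \<le> \<parallel>X\<^sub>k\<^sub>+\<^sub>1 - x\<^sub>k\<^sub>+\<^sub>1\<parallel>\<close>.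
  Everything then rests on \<open>E|Z - E Z|\<^sup>p \<le> C\<^sub>p E|Z|\<^sup>p\<close> for real \<open>Z\<close> (with \<open>C\<^sub>2 = 1\<close> for the
  conditional variances). By homogeneity it suffices to find a slope \<open>l\<close> with
  \<open>|z - 1|\<^sup>p - C\<^sub>p|z|\<^sup>p \<le> l (z - 1)\<close> for all \<open>z\<close>. It exists because the inequality holds for all
  two-point distributions with mean 1, and that case is H\<ouml>lder's inequality with optimally
  chosen weights.\<close>

lemma powr_add_le_weighted:
  fixes \<alpha> \<beta> s q :: real
  assumes "0 \<le> \<alpha>" "0 \<le> \<beta>" "0 < s" "s < 1" "1 \<le> q"
  shows "(\<alpha> + \<beta>) powr q \<le> s powr (1 - q) * \<alpha> powr q + (1 - s) powr (1 - q) * \<beta> powr q"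
proof (cases "\<alpha> = 0 \<or> \<beta> = 0")
  case True
  have "1 \<le> s powr (1 - q)" "1 \<le> (1 - s) powr (1 - q)"
    using assms powr_mono2'[of "1 - q" s 1] powr_mono2'[of "1 - q" "1 - s" 1] by auto
  then show ?thesis
    using True assms by (auto simp: mult_le_cancel_right1)
next
  case False
  with assms have pos: "0 < \<alpha> / s" "0 < \<beta> / (1 - s)" by auto
  have "((1 - s) *\<^sub>R (\<beta> / (1 - s)) + s *\<^sub>R (\<alpha> / s)) powr q
      \<le> (1 - s) * (\<beta> / (1 - s)) powr q + s * (\<alpha> / s) powr q"
    using convex_onD[OF powr_convex[OF assms(5)], of s "\<beta> / (1 - s)" "\<alpha> / s"] pos assms by auto
  moreover have "(1 - s) *\<^sub>R (\<beta> / (1 - s)) + s *\<^sub>R (\<alpha> / s) = \<alpha> + \<beta>"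
    using assms by simp
  moreover have "(1 - s) * (\<beta> / (1 - s)) powr q = (1 - s) powr (1 - q) * \<beta> powr q"
    and "s * (\<alpha> / s) powr q = s powr (1 - q) * \<alpha> powr q"
    using assms by (simp_all add: powr_divide powr_diff)
  ultimately show ?thesis by simp
qed

definition C_const_at :: "real \<Rightarrow> real \<Rightarrow> real" where
  "C_const_at q b = (b powr (q - 1) + (1 - b) powr (q - 1)) *
      (b powr (1 / (q - 1)) + (1 - b) powr (1 / (q - 1))) powr (q - 1)"

lemma C_const_eq_SUP: "C_const q = (SUP b\<in>{0..1}. C_const_at q b)"
  unfolding C_const_def C_const_at_def ..

lemma bdd_above_C_const_at:
  assumes "1 < q"
  shows "bdd_above (C_const_at q ` {0..1})"
proof (rule bdd_aboveI2)
  fix b :: real assume b: "b \<in> {0..1}"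
  have "b powr (q - 1) + (1 - b) powr (q - 1) \<le> 2"
    and "b powr (1 / (q - 1)) + (1 - b) powr (1 / (q - 1)) \<le> 2"
    using powr_le1[of "q - 1" b] powr_le1[of "q - 1" "1 - b"] powr_le1[of "1 / (q - 1)" b]
      powr_le1[of "1 / (q - 1)" "1 - b"] b assms by auto
  then show "C_const_at q b \<le> 2 * 2 powr (q - 1)"
    unfolding C_const_at_def using assms by (intro mult_mono powr_mono2) auto
qed

lemma C_const_at_le_C_const:
  assumes "1 < q" "0 \<le> b" "b \<le> 1"
  shows "C_const_at q b \<le> C_const q"
  unfolding C_const_eq_SUP using assms by (intro cSUP_upper bdd_above_C_const_at) auto

lemma C_const_ge_1: "1 < q \<Longrightarrow> 1 \<le> C_const q"
  using C_const_at_le_C_const[of q 0] by (simp add: C_const_at_def)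

lemma C_const_2: "C_const 2 = 1"
proof -
  have "C_const_at 2 b = 1" if "b \<in> {0..1}" for b
    using that by (simp add: C_const_at_def)
  then show ?thesis
    unfolding C_const_eq_SUP by (subst SUP_cong[OF refl, of _ _ "\<lambda>_. 1"]) auto
qed

lemma mult_powr_add_le_weighted:
  fixes w q \<alpha> \<beta> :: real
  assumes w: "0 < w" "w < 1" and q: "1 < q" and "0 \<le> \<alpha>" "0 \<le> \<beta>"
  defines "S \<equiv> w powr (1 / (q - 1)) + (1 - w) powr (1 / (q - 1))"
  shows "w * (1 - w) * (\<alpha> + \<beta>) powr q \<le> S powr (q - 1) * (w * \<alpha> powr q + (1 - w) * \<beta> powr q)"
proof -
  define s where "s = (1 - w) powr (1 / (q - 1)) / S"
  have S: "0 < S" using w by (simp add: S_def add_pos_pos)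
  have s: "0 < s" "s < 1" and s1: "1 - s = w powr (1 / (q - 1)) / S"
    using w S by (auto simp: s_def S_def field_simps)
  have inv: "(u powr (1 / (q - 1)) / S) powr (1 - q) = S powr (q - 1) / u" if "0 < u" for u
  proof -
    have "(u powr (1 / (q - 1)) / S) powr (1 - q) = u powr (1 / (q - 1) * (1 - q)) / S powr (1 - q)"
      using that S by (simp add: powr_divide powr_powr)
    also have "1 / (q - 1) * (1 - q) = -1" using q by (simp add: field_simps)
    also have "u powr -1 / S powr (1 - q) = u powr -1 * S powr (q - 1)"
      by (simp add: divide_powr_uminus)
    finally show ?thesis
      using that by (simp add: powr_minus_divide)
  qed
  have "w * (1 - w) * (\<alpha> + \<beta>) powr q
      \<le> w * (1 - w) * (s powr (1 - q) * \<alpha> powr q + (1 - s) powr (1 - q) * \<beta> powr q)"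
    using powr_add_le_weighted[of \<alpha> \<beta> s q] assms s by (intro mult_left_mono) auto
  also have "\<dots> = (w * (1 - w) * s powr (1 - q)) * \<alpha> powr q + (w * (1 - w) * (1 - s) powr (1 - q)) * \<beta> powr q"
    by (simp add: algebra_simps)
  also have "w * (1 - w) * s powr (1 - q) = w * S powr (q - 1)"
    using inv[of "1 - w"] w by (simp add: s_def)
  also have "w * (1 - w) * (1 - s) powr (1 - q) = (1 - w) * S powr (q - 1)"
    using inv[of w] w by (simp add: s1)
  finally show ?thesis by (simp add: algebra_simps)
qed

text \<open>If \<open>Z\<close> takes the value \<open>a\<close> with probability \<open>(b - 1) / (b - a)\<close> and \<open>b\<close> otherwise, so that
  \<open>E Z = 1\<close>, the left-hand side is \<open>(b - a) (E|Z - E Z|\<^sup>q - C\<^sub>q E|Z|\<^sup>q)\<close>.\<close>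

lemma two_point_central_moment_le:
  fixes q a b :: real
  assumes q: "1 < q" and ab: "a < 1" "1 < b"
  shows "(\<bar>b - 1\<bar> powr q - C_const q * \<bar>b\<bar> powr q) * (1 - a)
       + (\<bar>a - 1\<bar> powr q - C_const q * \<bar>a\<bar> powr q) * (b - 1) \<le> 0"
proof -
  define d where "d = b - a"
  define w where "w = (b - 1) / d"
  define S where "S = w powr (1 / (q - 1)) + (1 - w) powr (1 / (q - 1))"
  define G where "G = w powr (q - 1) + (1 - w) powr (q - 1)"
  have d: "0 < d" using ab by (simp add: d_def)
  have w: "0 < w" "w < 1" using ab by (auto simp: w_def d_def field_simps)
  have bd: "b - 1 = w * d" and ad: "1 - a = (1 - w) * d"
    using d by (simp_all add: w_def d_def field_simps)
  have "\<bar>b - 1\<bar> powr q * (1 - a) + \<bar>a - 1\<bar> powr q * (b - 1)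
      = d * G * (w * (1 - w) * d powr q)"
  proof -
    have pb: "\<bar>b - 1\<bar> powr q = w * w powr (q - 1) * d powr q"
      and pa: "\<bar>a - 1\<bar> powr q = (1 - w) * (1 - w) powr (q - 1) * d powr q"
      using w d ab by (simp_all add: bd abs_of_neg ad powr_mult powr_diff)
    show ?thesis by (simp only: pb pa) (simp add: bd ad G_def algebra_simps)
  qed
  also have "\<dots> \<le> d * G * (S powr (q - 1) * (w * \<bar>a\<bar> powr q + (1 - w) * \<bar>b\<bar> powr q))"
  proof -
    have "d powr q \<le> (\<bar>a\<bar> + \<bar>b\<bar>) powr q"
      using q ab by (intro powr_mono2) (auto simp: d_def)
    then have "w * (1 - w) * d powr q \<le> w * (1 - w) * (\<bar>a\<bar> + \<bar>b\<bar>) powr q"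
      using w by (intro mult_left_mono) auto
    also have "\<dots> \<le> S powr (q - 1) * (w * \<bar>a\<bar> powr q + (1 - w) * \<bar>b\<bar> powr q)"
      unfolding S_def using w q by (intro mult_powr_add_le_weighted) auto
    finally show ?thesis
      using d by (intro mult_left_mono) (auto simp: G_def)
  qed
  also have "\<dots> \<le> d * (C_const q * (w * \<bar>a\<bar> powr q + (1 - w) * \<bar>b\<bar> powr q))"
  proof -
    have "G * S powr (q - 1) \<le> C_const q"
      using C_const_at_le_C_const[of q w] q w by (simp add: C_const_at_def G_def S_def)
    then show ?thesis
      using d w by (simp only: mult.assoc[symmetric]) (intro mult_right_mono mult_left_mono; simp)
  qed
  also have "\<dots> = C_const q * \<bar>b\<bar> powr q * (1 - a) + C_const q * \<bar>a\<bar> powr q * (b - 1)"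
    unfolding bd ad by (simp add: algebra_simps)
  finally show ?thesis by (simp add: algebra_simps)
qed

lemma exists_supporting_line:
  fixes q :: real
  assumes q: "1 < q"
  obtains l where "\<And>z. \<bar>z - 1\<bar> powr q - C_const q * \<bar>z\<bar> powr q \<le> l * (z - 1)"
proof -
  define h where "h z = \<bar>z - 1\<bar> powr q - C_const q * \<bar>z\<bar> powr q" for z
  define l where "l = (SUP b\<in>{1<..}. h b / (b - 1))"
  have slopes: "h b / (b - 1) \<le> h a / (a - 1)" if "a < 1" "1 < b" for a b
    using two_point_central_moment_le[OF q that] that unfolding h_def by (simp add: field_simps)
  have bdd: "bdd_above ((\<lambda>b. h b / (b - 1)) ` {1<..})"
    using slopes[of 0] by (intro bdd_aboveI2[where M = "h 0 / (0 - 1)"]) auto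
  have "h z \<le> l * (z - 1)" for z
  proof (cases z "1::real" rule: linorder_cases)
    case less
    have "l \<le> h z / (z - 1)"
      unfolding l_def using less slopes by (intro cSUP_least) (auto intro: gt_ex)
    then show ?thesis using less by (simp add: field_simps)
  next
    case equal
    then show ?thesis using C_const_ge_1[OF q] by (simp add: h_def)
  next
    case greater
    have "h z / (z - 1) \<le> l"
      unfolding l_def using greater by (intro cSUP_upper bdd) auto
    then show ?thesis using greater by (simp add: field_simps)
  qed
  then show ?thesis using that unfolding h_def by blast
qed

lemma powr_abs_diff_le_linear:
  fixes q :: real
  assumes q: "1 < q"
  obtains L :: "real \<Rightarrow> real"
  where "\<And>z t. \<bar>z - t\<bar> powr q \<le> C_const q * \<bar>z\<bar> powr q + L t * (z - t)"
proof -
  obtain l where l: "\<And>u. \<bar>u - 1\<bar> powr q - C_const q * \<bar>u\<bar> powr q \<le> l * (u - 1)"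
    using exists_supporting_line[OF q] by blast
  have "\<bar>z - t\<bar> powr q \<le> C_const q * \<bar>z\<bar> powr q + l * \<bar>t\<bar> powr q / t * (z - t)" for z t
    \<comment> \<open>rescale by \<open>t\<close>; at \<open>t = 0\<close> the slope is \<open>0\<close> (division by zero) and \<open>C\<^sub>q \<ge> 1\<close> suffices\<close>
  proof (cases "t = 0")
    case True
    then show ?thesis using C_const_ge_1[OF q] by (simp add: mult_le_cancel_right1)
  next
    case False
    have "\<bar>t\<bar> powr q * (\<bar>z / t - 1\<bar> powr q - C_const q * \<bar>z / t\<bar> powr q)
        \<le> \<bar>t\<bar> powr q * (l * (z / t - 1))"
      using l[of "z / t"] by (intro mult_left_mono) auto
    moreover have "\<bar>t\<bar> * \<bar>z / t - 1\<bar> = \<bar>z - t\<bar>" "\<bar>t\<bar> * \<bar>z / t\<bar> = \<bar>z\<bar>"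
      using False by (simp_all add: abs_mult[symmetric] field_simps)
    ultimately show ?thesis
      using False by (simp add: powr_mult[symmetric] field_simps)
  qed
  then show ?thesis by (rule that[of "\<lambda>t. l * \<bar>t\<bar> powr q / t"])
qed

context prob_space
begin

lemma nn_integral_central_moment_le:
  fixes g :: "'a \<Rightarrow> real"
  assumes q: "1 < q" and g: "integrable M g"
  shows "(\<integral>\<^sup>+ x. ennreal (\<bar>g x - expectation g\<bar> powr q) \<partial>M)
      \<le> ennreal (C_const q) * (\<integral>\<^sup>+ x. ennreal (\<bar>g x\<bar> powr q) \<partial>M)"
proof (cases "(\<integral>\<^sup>+ x. ennreal (\<bar>g x\<bar> powr q) \<partial>M) = \<infinity>")
  case True
  then show ?thesis using C_const_ge_1[OF q] by (simp add: ennreal_mult_top)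
next
  case False
  have [measurable]: "g \<in> borel_measurable M" using g by auto
  have gq: "integrable M (\<lambda>x. \<bar>g x\<bar> powr q)"
    using False by (intro integrableI_bounded) (auto simp: top.not_eq_extremum)
  obtain L where L: "\<And>z t. \<bar>z - t\<bar> powr q \<le> C_const q * \<bar>z\<bar> powr q + L t * (z - t)"
    using powr_abs_diff_le_linear[OF q] by blast
  define k where "k x = C_const q * \<bar>g x\<bar> powr q + L (expectation g) * (g x - expectation g)" for x
  have k: "integrable M k" unfolding k_def using gq g by auto
  have gk: "\<bar>g x - expectation g\<bar> powr q \<le> k x" for x
    unfolding k_def by (rule L)
  have "(\<integral>\<^sup>+ x. ennreal (\<bar>g x - expectation g\<bar> powr q) \<partial>M) \<le> (\<integral>\<^sup>+ x. ennreal (k x) \<partial>M)"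
    by (intro nn_integral_mono ennreal_leI gk)
  also have "\<dots> = ennreal (expectation k)"
    using gk by (intro nn_integral_eq_integral k AE_I2) (auto intro: order.trans[OF powr_ge_zero])
  also have "expectation k = C_const q * expectation (\<lambda>x. \<bar>g x\<bar> powr q)"
    unfolding k_def using gq g by (simp add: prob_space)
  also have "ennreal \<dots> = ennreal (C_const q) * (\<integral>\<^sup>+ x. ennreal (\<bar>g x\<bar> powr q) \<partial>M)"
    using C_const_ge_1[OF q] gq by (simp add: ennreal_mult nn_integral_eq_integral)
  finally show ?thesis .
qed

lemma nn_integral_indep_var:
  assumes "indep_var MU U MV V" and [measurable]: "f \<in> borel_measurable (MU \<Otimes>\<^sub>M MV)"
  shows "(\<integral>\<^sup>+ \<omega>. f (U \<omega>, V \<omega>) \<partial>M) = (\<integral>\<^sup>+ \<omega>. \<integral>\<^sup>+ \<omega>'. f (U \<omega>, V \<omega>') \<partial>M \<partial>M)"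
proof -
  have [measurable]: "U \<in> measurable M MU" "V \<in> measurable M MV"
    and prod: "distr M MU U \<Otimes>\<^sub>M distr M MV V = distr M (MU \<Otimes>\<^sub>M MV) (\<lambda>x. (U x, V x))"
    using assms(1) by (simp_all add: indep_var_distribution_eq)
  interpret PV: prob_space "distr M MV V" by (rule prob_space_distr) simp
  have "(\<integral>\<^sup>+ \<omega>. f (U \<omega>, V \<omega>) \<partial>M) = (\<integral>\<^sup>+ z. f z \<partial>(distr M MU U \<Otimes>\<^sub>M distr M MV V))"
    by (simp add: prod nn_integral_distr)
  also have "\<dots> = (\<integral>\<^sup>+ u. \<integral>\<^sup>+ v. f (u, v) \<partial>distr M MV V \<partial>distr M MU U)"
    by (rule PV.nn_integral_fst[symmetric]) simp
  also have "\<dots> = (\<integral>\<^sup>+ \<omega>. \<integral>\<^sup>+ \<omega>'. f (U \<omega>, V \<omega>') \<partial>M \<partial>M)"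
    by (subst nn_integral_distr) (auto intro!: nn_integral_cong nn_integral_distr PV.borel_measurable_nn_integral_fst)
  finally show ?thesis .
qed

lemma
  fixes f :: "_ \<Rightarrow> real"
  assumes "indep_var MU U MV V" and [measurable]: "f \<in> borel_measurable (MU \<Otimes>\<^sub>M MV)"
    and int: "integrable M (\<lambda>\<omega>. f (U \<omega>, V \<omega>))"
  shows integrable_indep_var: "integrable M (\<lambda>\<omega>. \<integral>\<omega>'. f (U \<omega>, V \<omega>') \<partial>M)"
    and integral_indep_var: "(\<integral>\<omega>. f (U \<omega>, V \<omega>) \<partial>M) = (\<integral>\<omega>. \<integral>\<omega>'. f (U \<omega>, V \<omega>') \<partial>M \<partial>M)"
proof -
  have [measurable]: "U \<in> measurable M MU" "V \<in> measurable M MV"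
    and prod: "distr M MU U \<Otimes>\<^sub>M distr M MV V = distr M (MU \<Otimes>\<^sub>M MV) (\<lambda>x. (U x, V x))"
    using assms(1) by (simp_all add: indep_var_distribution_eq)
  interpret PU: prob_space "distr M MU U" by (rule prob_space_distr) simp
  interpret PV: prob_space "distr M MV V" by (rule prob_space_distr) simp
  interpret P: pair_sigma_finite "distr M MU U" "distr M MV V" ..
  have f: "integrable (distr M MU U \<Otimes>\<^sub>M distr M MV V) f"
    unfolding prod using int by (subst integrable_distr_eq) auto
  have [measurable]: "(\<lambda>u. \<integral>v. f (u, v) \<partial>distr M MV V) \<in> borel_measurable MU"
    using PV.borel_measurable_lebesgue_integral[of "curry f" MU] by simp
  have inner: "(\<integral>v. f (U \<omega>, v) \<partial>distr M MV V) = (\<integral>\<omega>'. f (U \<omega>, V \<omega>') \<partial>M)"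
    if "\<omega> \<in> space M" for \<omega>
    using that measurable_space[of U M MU] by (intro integral_distr) auto
  have "integrable (distr M MU U) (\<lambda>u. \<integral>v. f (u, v) \<partial>distr M MV V)"
    by (rule P.integrable_fst'[OF f])
  then show "integrable M (\<lambda>\<omega>. \<integral>\<omega>'. f (U \<omega>, V \<omega>') \<partial>M)"
    by (subst (asm) integrable_distr_eq) (auto simp: inner cong: Bochner_Integration.integrable_cong)
  have "(\<integral>\<omega>. f (U \<omega>, V \<omega>) \<partial>M) = (\<integral>z. f z \<partial>(distr M MU U \<Otimes>\<^sub>M distr M MV V))"
    by (simp add: prod integral_distr)
  also have "\<dots> = (\<integral>u. \<integral>v. f (u, v) \<partial>distr M MV V \<partial>distr M MU U)"
    by (rule P.integral_fst'[OF f, symmetric])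
  also have "\<dots> = (\<integral>\<omega>. \<integral>\<omega>'. f (U \<omega>, V \<omega>') \<partial>M \<partial>M)"
    by (subst integral_distr) (auto simp: inner cong: Bochner_Integration.integral_cong)
  finally show "(\<integral>\<omega>. f (U \<omega>, V \<omega>) \<partial>M) = (\<integral>\<omega>. \<integral>\<omega>'. f (U \<omega>, V \<omega>') \<partial>M \<partial>M)" .
qed

end

lemma space_natural_filtration [simp]: "space (natural_filtration N \<zeta> j) = space N"
  unfolding natural_filtration_def by (rule space_measure_of) auto

lemma sets_natural_filtration:
  "sets (natural_filtration N \<zeta> j) = sigma_sets (space N) {\<zeta> i -` A \<inter> space N | i A. i \<le> j \<and> A \<in> sets borel}"
  unfolding natural_filtration_def by (rule sets_measure_of) auto

lemma measurable_natural_filtration: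
  "i \<le> j \<Longrightarrow> \<zeta> i \<in> borel_measurable (natural_filtration N \<zeta> j)"
  by (rule measurableI) (auto simp: sets_natural_filtration)

lemma sets_natural_filtration_subset:
  assumes "\<And>i. i \<le> j \<Longrightarrow> \<zeta> i \<in> borel_measurable N"
  shows "sets (natural_filtration N \<zeta> j) \<subseteq> sets N"
  unfolding sets_natural_filtration using assms by (intro sets.sigma_sets_subset) auto

lemma sets_natural_filtration_subset_vimage_algebra:
  assumes H: "H \<in> space N \<rightarrow> space MH"
    and factor: "\<And>i. i \<le> j \<Longrightarrow> \<exists>g \<in> borel_measurable MH. \<forall>\<omega>\<in>space N. \<zeta> i \<omega> = g (H \<omega>)"
  shows "sets (natural_filtration N \<zeta> j) \<subseteq> sets (vimage_algebra (space N) H MH)"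
  unfolding sets_natural_filtration
proof (intro sigma_algebra.sigma_sets_subset subsetI)
  show "sigma_algebra (space N) (sets (vimage_algebra (space N) H MH))"
    using sets.sigma_algebra_axioms[of "vimage_algebra (space N) H MH"] by simp
next
  fix S assume "S \<in> {\<zeta> i -` A \<inter> space N | i A. i \<le> j \<and> A \<in> sets borel}"
  then obtain i A where S: "S = \<zeta> i -` A \<inter> space N" and "i \<le> j" "A \<in> sets borel"
    by auto
  then obtain g where g: "g \<in> borel_measurable MH" "\<forall>\<omega>\<in>space N. \<zeta> i \<omega> = g (H \<omega>)"
    using factor by blast
  have "H -` (g -` A \<inter> space MH) \<inter> space N \<in> sets (vimage_algebra (space N) H MH)"
    using measurable_sets[OF g(1) \<open>A \<in> sets borel\<close>] by (rule in_vimage_algebra)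
  moreover have "H -` (g -` A \<inter> space MH) \<inter> space N = S"
    using S g(2) H by auto
  ultimately show "S \<in> sets (vimage_algebra (space N) H MH)" by simp
qed

lemma (in finite_measure_subalgebra) esssup_nn_cond_exp_le:
  assumes [measurable]: "g \<in> borel_measurable M"
    and bound: "\<And>A. A \<in> sets F \<Longrightarrow> (\<integral>\<^sup>+ x. indicator A x * g x \<partial>M) \<le> c * emeasure M A"
  shows "esssup M (nn_cond_exp M F g) \<le> c"
proof (intro esssup_I)
  show "AE x in M. nn_cond_exp M F g x \<le> c"
  proof (rule ccontr)
    assume not_le: "\<not> (AE x in M. nn_cond_exp M F g x \<le> c)"
    define S where "S = {x \<in> space M. c < nn_cond_exp M F g x}"
    have "S \<in> sets F"
    proof -
      have "space F = space M" using subalg by (simp add: subalgebra_def)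
      moreover have "{x \<in> space F. c < nn_cond_exp M F g x} \<in> sets F" by measurable
      ultimately show ?thesis by (simp add: S_def)
    qed
    then have [measurable]: "S \<in> sets M"
      using subalg by (auto simp: subalgebra_def)
    have c: "c \<noteq> \<infinity>" using not_le by auto
    have "(\<integral>\<^sup>+ x. indicator S x * c \<partial>M) < (\<integral>\<^sup>+ x. indicator S x * nn_cond_exp M F g x \<partial>M)"
    proof (rule nn_integral_less)
      show "(\<integral>\<^sup>+ x. indicator S x * c \<partial>M) \<noteq> \<infinity>"
        using c by (simp add: mult.commute[of "indicator S _"] nn_integral_cmult_indicator ennreal_mult_eq_top_iff)
      show "AE x in M. indicator S x * c \<le> indicator S x * nn_cond_exp M F g x"
        by (auto simp: S_def indicator_def less_imp_le)
      show "\<not> (AE x in M. indicator S x * nn_cond_exp M F g x \<le> indicator S x * c)"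
      proof
        assume "AE x in M. indicator S x * nn_cond_exp M F g x \<le> indicator S x * c"
        then have "AE x in M. nn_cond_exp M F g x \<le> c"
          using AE_space by eventually_elim (auto simp: S_def intro: ccontr)
        with not_le show False ..
      qed
    qed auto
    also have "\<dots> = (\<integral>\<^sup>+ x. indicator S x * g x \<partial>M)"
      using \<open>S \<in> sets F\<close> by (intro nn_cond_exp_intg) auto
    also have "\<dots> \<le> (\<integral>\<^sup>+ x. indicator S x * c \<partial>M)"
      using bound[OF \<open>S \<in> sets F\<close>] by (simp add: nn_integral_cmult_indicator mult.commute)
    finally show False by simp
  qed
qed simp

locale indep_banach_sum = prob_space M for M :: "'a measure" +
  fixes n :: nat and X :: "nat \<Rightarrow> 'a \<Rightarrow> 'b::{banach, second_countable_topology}"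
  assumes X_measurable [measurable]: "\<And>i. i \<in> {1..n} \<Longrightarrow> X i \<in> borel_measurable M"
    and X_indep: "indep_vars (\<lambda>_. borel) X {1..n}"
    and integrable_norm_sum: "integrable M (\<lambda>\<omega>. norm (\<Sum>i=1..n. X i \<omega>))"
begin

definition head :: "nat \<Rightarrow> 'a \<Rightarrow> 'b" where
  "head k \<omega> = (\<Sum>i=1..k. X i \<omega>)"

definition tail :: "nat \<Rightarrow> 'a \<Rightarrow> 'b" where
  "tail k \<omega> = (\<Sum>i\<in>{Suc k..n}. X i \<omega>)"

definition block :: "nat set \<Rightarrow> 'a \<Rightarrow> nat \<Rightarrow> 'b" where
  "block I \<omega> = restrict (\<lambda>i. X i \<omega>) I"

definition block_space :: "nat set \<Rightarrow> (nat \<Rightarrow> 'b) measure" where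
  "block_space I = PiM I (\<lambda>_. borel)"

definition mean_norm :: real where
  "mean_norm = expectation (\<lambda>\<omega>. norm (\<Sum>i=1..n. X i \<omega>))"

definition phi :: "nat \<Rightarrow> 'b \<Rightarrow> real" where
  "phi k t = expectation (\<lambda>\<omega>. norm (t + tail k \<omega>))"

definition zeta :: "nat \<Rightarrow> 'a \<Rightarrow> real" where
  "zeta k \<omega> = phi k (head k \<omega>) - mean_norm"

lemma head_measurable [measurable]: "k \<le> n \<Longrightarrow> head k \<in> borel_measurable M"
  unfolding head_def by measurable

lemma tail_measurable [measurable]: "tail k \<in> borel_measurable M"
  unfolding tail_def by measurable

lemma block_measurable [measurable]: "I \<subseteq> {1..n} \<Longrightarrow> block I \<in> measurable M (block_space I)"
  unfolding block_def block_space_def by (intro measurable_restrict) auto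

lemma sum_block_measurable:
  "finite J \<Longrightarrow> J \<subseteq> I \<Longrightarrow> (\<lambda>h. \<Sum>i\<in>J. h i) \<in> borel_measurable (block_space I)"
  unfolding block_space_def by (intro borel_measurable_sum measurable_component_singleton) auto

lemma sum_head_block_measurable [measurable]:
  "(\<lambda>h. \<Sum>i=1..k. h i) \<in> borel_measurable (block_space {1..k})"
  by (rule sum_block_measurable) auto

lemma next_block_measurable [measurable]:
  "(\<lambda>h. h (Suc k)) \<in> borel_measurable (block_space {Suc k})"
  unfolding block_space_def by (rule measurable_component_singleton) simp

lemma sum_block [simp]: "(\<Sum>i\<in>I. block I \<omega> i) = (\<Sum>i\<in>I. X i \<omega>)"
  unfolding block_def by (intro sum.cong) auto

lemma block_apply [simp]: "i \<in> I \<Longrightarrow> block I \<omega> i = X i \<omega>"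
  unfolding block_def by simp

lemma head_add_tail: "k \<le> n \<Longrightarrow> head k \<omega> + tail k \<omega> = (\<Sum>i=1..n. X i \<omega>)"
  unfolding head_def tail_def
  by (subst sum.union_disjoint[symmetric]) (auto intro: sum.cong)

lemma head_Suc: "head (Suc k) \<omega> = head k \<omega> + X (Suc k) \<omega>"
  by (simp add: head_def)

lemma tail_eq_X_add_tail_Suc: "k < n \<Longrightarrow> tail k \<omega> = X (Suc k) \<omega> + tail (Suc k) \<omega>"
  unfolding tail_def by (subst sum.atLeast_Suc_atMost) auto

lemma indep_blocks:
  "I \<inter> J = {} \<Longrightarrow> I \<subseteq> {1..n} \<Longrightarrow> J \<subseteq> {1..n} \<Longrightarrow>
    indep_var (block_space I) (block I) (block_space J) (block J)"
  unfolding block_def block_space_def by (rule indep_var_restrict[OF X_indep])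

lemma indep_block_sums:
  assumes "I \<inter> J = {}" "I \<subseteq> {1..n}" "J \<subseteq> {1..n}"
  shows "indep_var borel (\<lambda>\<omega>. \<Sum>i\<in>I. X i \<omega>) borel (\<lambda>\<omega>. \<Sum>i\<in>J. X i \<omega>)"
proof -
  have "finite I" "finite J" using assms finite_subset by blast+
  then have "indep_var borel ((\<lambda>h. \<Sum>i\<in>I. h i) \<circ> block I) borel ((\<lambda>h. \<Sum>i\<in>J. h i) \<circ> block J)"
    using assms by (intro indep_var_compose[OF indep_blocks[OF assms]] sum_block_measurable) auto
  then show ?thesis by (simp add: comp_def)
qed

lemma indep_head_tail: "k \<le> n \<Longrightarrow> indep_var borel (head k) borel (tail k)"
  using indep_block_sums[of "{1..k}" "{Suc k..n}"] by (auto simp: head_def[abs_def] tail_def[abs_def])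

lemma indep_X_tail: "k < n \<Longrightarrow> indep_var borel (X (Suc k)) borel (tail (Suc k))"
  using indep_block_sums[of "{Suc k}" "{Suc (Suc k)..n}"] by (auto simp: tail_def[abs_def])

lemma indep_head_block_next:
  "k < n \<Longrightarrow> indep_var (block_space {1..k}) (block {1..k}) (block_space {Suc k}) (block {Suc k})"
  by (rule indep_blocks) auto


lemma integrable_norm_add_tail:
  assumes k: "k \<le> n"
  shows "integrable M (\<lambda>\<omega>. norm (t + tail k \<omega>))"
proof -
  have "(\<integral>\<^sup>+ \<omega>. \<integral>\<^sup>+ \<omega>'. ennreal (norm (head k \<omega> + tail k \<omega>')) \<partial>M \<partial>M)
      = (\<integral>\<^sup>+ \<omega>. ennreal (norm (\<Sum>i=1..n. X i \<omega>)) \<partial>M)"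
    using nn_integral_indep_var[OF indep_head_tail[OF k], of "\<lambda>(u, v). ennreal (norm (u + v))"]
    by (simp add: head_add_tail[OF k])
  also have "\<dots> < \<infinity>"
    using integrable_norm_sum by (simp add: integrable_iff_bounded)
  finally have fin: "AE \<omega> in M. (\<integral>\<^sup>+ \<omega>'. ennreal (norm (head k \<omega> + tail k \<omega>')) \<partial>M) \<noteq> \<infinity>"
    using k by (intro nn_integral_PInf_AE) auto
  have "\<exists>\<omega>. (\<integral>\<^sup>+ \<omega>'. ennreal (norm (head k \<omega> + tail k \<omega>')) \<partial>M) \<noteq> \<infinity>"
  proof (rule ccontr)
    assume "\<not> ?thesis"
    with fin show False by (simp add: AE_False)
  qed
  then obtain \<omega>\<^sub>0 where "(\<integral>\<^sup>+ \<omega>'. ennreal (norm (head k \<omega>\<^sub>0 + tail k \<omega>')) \<partial>M) \<noteq> \<infinity>" ..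
  then have "integrable M (\<lambda>\<omega>'. norm (head k \<omega>\<^sub>0 + tail k \<omega>'))"
    by (intro integrableI_bounded) (auto simp: top.not_eq_extremum)
  then show ?thesis
  proof (rule Bochner_Integration.integrable_bound[OF Bochner_Integration.integrable_add[OF integrable_const]])
    show "AE \<omega> in M. norm (norm (t + tail k \<omega>)) \<le> norm (norm (t - head k \<omega>\<^sub>0) + norm (head k \<omega>\<^sub>0 + tail k \<omega>))"
      using norm_triangle_ineq[of "t - head k \<omega>\<^sub>0" "head k \<omega>\<^sub>0 + tail k _"] by (simp add: algebra_simps)
  qed simp
qed

lemma phi_measurable [measurable]: "phi k \<in> borel_measurable borel"
  unfolding phi_def by measurable

lemma phi_lipschitz:
  assumes "k \<le> n"
  shows "\<bar>phi k t - phi k s\<bar> \<le> norm (t - s)"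
proof -
  have "\<bar>phi k t - phi k s\<bar> = \<bar>expectation (\<lambda>\<omega>. norm (t + tail k \<omega>) - norm (s + tail k \<omega>))\<bar>"
    unfolding phi_def using integrable_norm_add_tail[OF assms] by simp
  also have "\<dots> \<le> expectation (\<lambda>\<omega>. \<bar>norm (t + tail k \<omega>) - norm (s + tail k \<omega>)\<bar>)"
    using integral_norm_bound[of M "\<lambda>\<omega>. norm (t + tail k \<omega>) - norm (s + tail k \<omega>)"] by simp
  also have "\<dots> \<le> expectation (\<lambda>\<omega>. norm (t - s))"
  proof (intro integral_mono)
    show "\<bar>norm (t + tail k \<omega>) - norm (s + tail k \<omega>)\<bar> \<le> norm (t - s)" for \<omega>
      using norm_triangle_ineq3[of "t + tail k \<omega>" "s + tail k \<omega>"] by simp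
  qed (use integrable_norm_add_tail[OF assms] in auto)
  also have "\<dots> = norm (t - s)" by (simp add: prob_space)
  finally show ?thesis .
qed

lemma
  assumes k: "k < n"
  shows integrable_phi_Suc: "integrable M (\<lambda>\<omega>. phi (Suc k) (t + X (Suc k) \<omega>))"
    and phi_eq_expectation_phi_Suc: "phi k t = expectation (\<lambda>\<omega>. phi (Suc k) (t + X (Suc k) \<omega>))"
proof -
  have int: "integrable M (\<lambda>\<omega>. (\<lambda>(u, v). norm (t + u + v)) (X (Suc k) \<omega>, tail (Suc k) \<omega>))"
    using integrable_norm_add_tail[of k t] k by (simp add: tail_eq_X_add_tail_Suc add.assoc)
  show "integrable M (\<lambda>\<omega>. phi (Suc k) (t + X (Suc k) \<omega>))"
    using integrable_indep_var[OF indep_X_tail[OF k] _ int] by (simp add: phi_def add.assoc)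
  show "phi k t = expectation (\<lambda>\<omega>. phi (Suc k) (t + X (Suc k) \<omega>))"
    using integral_indep_var[OF indep_X_tail[OF k] _ int] k
    by (simp add: phi_def tail_eq_X_add_tail_Suc add.assoc)
qed

lemma zeta_measurable [measurable]: "k \<le> n \<Longrightarrow> zeta k \<in> borel_measurable M"
  unfolding zeta_def by measurable

lemma integrable_zeta: 
  assumes k: "k \<le> n"
  shows "integrable M (zeta k)"
proof -
  have "integrable M (\<lambda>\<omega>. (\<lambda>(u, v). norm (u + v)) (head k \<omega>, tail k \<omega>))"
    using integrable_norm_sum by (simp add: head_add_tail[OF k])
  from integrable_indep_var[OF indep_head_tail[OF k] _ this] show ?thesis
    unfolding zeta_def phi_def by auto
qed

lemma zeta_0: "zeta 0 \<omega> = 0"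
  by (simp add: zeta_def phi_def mean_norm_def head_def tail_def)

lemma zeta_n: "zeta n \<omega> = norm (\<Sum>i=1..n. X i \<omega>) - mean_norm"
  by (simp add: zeta_def phi_def head_def tail_def prob_space)


lemma sets_natural_filtration_zeta: "k \<le> n \<Longrightarrow> sets (natural_filtration M zeta k) \<subseteq> sets M"
  by (rule sets_natural_filtration_subset) simp

lemma natural_filtration_subalgebra:
  "k \<le> n \<Longrightarrow> finite_measure_subalgebra M (natural_filtration M zeta k)"
  by unfold_locales (simp add: subalgebra_def sets_natural_filtration_zeta)

lemma natural_filtration_set_eq_vimage:
  assumes k: "k \<le> n" and A: "A \<in> sets (natural_filtration M zeta k)"
  obtains B where "B \<in> sets (block_space {1..k})" "A = block {1..k} -` B \<inter> space M"
proof -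
  have factor: "\<exists>g \<in> borel_measurable (block_space {1..k}). \<forall>\<omega>\<in>space M. zeta i \<omega> = g (block {1..k} \<omega>)"
    if "i \<le> k" for i
  proof (intro bexI ballI)
    have "(\<lambda>h. \<Sum>l=1..i. h l) \<in> borel_measurable (block_space {1..k})"
      using that by (intro sum_block_measurable) auto
    then show "(\<lambda>h. phi i (\<Sum>l=1..i. h l) - mean_norm) \<in> borel_measurable (block_space {1..k})"
      by measurable
    show "zeta i \<omega> = phi i (\<Sum>l=1..i. block {1..k} \<omega> l) - mean_norm" for \<omega>
      using that by (simp add: zeta_def head_def)
  qed
  have "block {1..k} \<in> space M \<rightarrow> space (block_space {1..k})"
    using measurable_space[OF block_measurable, of "{1..k}"] k by auto
  with sets_natural_filtration_subset_vimage_algebra[where \<zeta> = zeta and j = k, OF _ factor] A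
  have "A \<in> {block {1..k} -` B \<inter> space M | B. B \<in> sets (block_space {1..k})}"
    by (auto simp: sets_vimage_algebra2)
  then show ?thesis using that by blast
qed

lemma set_integral_zeta_Suc:
  assumes k: "k < n" and A: "A \<in> sets (natural_filtration M zeta k)"
  shows "(\<integral>\<omega>\<in>A. zeta (Suc k) \<omega> \<partial>M) = (\<integral>\<omega>\<in>A. zeta k \<omega> \<partial>M)"
proof -
  obtain B where [measurable]: "B \<in> sets (block_space {1..k})" and AB: "A = block {1..k} -` B \<inter> space M"
    using natural_filtration_set_eq_vimage[OF _ A] k by auto
  have A_sets [measurable]: "A \<in> sets M"
    using sets_natural_filtration_zeta[of k] A k by auto
  define f where "f = (\<lambda>(h, h'). indicator B h * (phi (Suc k) ((\<Sum>l=1..k. h l) + h' (Suc k)) - mean_norm) :: real)"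
  have f: "f \<in> borel_measurable (block_space {1..k} \<Otimes>\<^sub>M block_space {Suc k})"
    unfolding f_def by measurable
  have f_eq: "f (block {1..k} \<omega>, block {Suc k} \<omega>')
      = indicator A \<omega> * (phi (Suc k) (head k \<omega> + X (Suc k) \<omega>') - mean_norm)"
    if "\<omega> \<in> space M" for \<omega> \<omega>'
    using that by (simp add: f_def AB indicator_def head_def)
  have f_zeta: "f (block {1..k} \<omega>, block {Suc k} \<omega>) = indicator A \<omega> *\<^sub>R zeta (Suc k) \<omega>"
    if "\<omega> \<in> space M" for \<omega>
    using that by (subst f_eq) (simp_all add: zeta_def head_Suc)
  have f_int: "(\<integral>\<omega>'. f (block {1..k} \<omega>, block {Suc k} \<omega>') \<partial>M) = indicator A \<omega> *\<^sub>R zeta k \<omega>"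
    if "\<omega> \<in> space M" for \<omega>
    using that integrable_phi_Suc[OF k] phi_eq_expectation_phi_Suc[OF k, of "head k \<omega>"]
    by (subst f_eq) (simp_all add: zeta_def prob_space)
  have "integrable M (\<lambda>\<omega>. f (block {1..k} \<omega>, block {Suc k} \<omega>))
      \<longleftrightarrow> integrable M (\<lambda>\<omega>. indicator A \<omega> *\<^sub>R zeta (Suc k) \<omega>)"
    by (intro Bochner_Integration.integrable_cong refl f_zeta)
  then have "integrable M (\<lambda>\<omega>. f (block {1..k} \<omega>, block {Suc k} \<omega>))"
    using integrable_mult_indicator[OF A_sets integrable_zeta[of "Suc k"]] k by simp
  note freeze = integral_indep_var[OF indep_head_block_next[OF k] f this]
  have "(\<integral>\<omega>\<in>A. zeta (Suc k) \<omega> \<partial>M) = (\<integral>\<omega>. f (block {1..k} \<omega>, block {Suc k} \<omega>) \<partial>M)"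
    unfolding set_lebesgue_integral_def by (intro Bochner_Integration.integral_cong refl f_zeta[symmetric])
  also have "\<dots> = (\<integral>\<omega>. \<integral>\<omega>'. f (block {1..k} \<omega>, block {Suc k} \<omega>') \<partial>M \<partial>M)"
    by (rule freeze)
  also have "\<dots> = (\<integral>\<omega>\<in>A. zeta k \<omega> \<partial>M)"
    unfolding set_lebesgue_integral_def by (intro Bochner_Integration.integral_cong refl f_int)
  finally show ?thesis .
qed

lemma real_martingale_zeta: "real_martingale M n zeta"
  unfolding real_martingale_def
proof (intro conjI allI impI ballI)
  fix j assume "j \<le> n"
  then show "zeta j \<in> borel_measurable M" "integrable M (zeta j)"
    by (auto intro: integrable_zeta)
next
  fix j assume "j \<in> {1..n}"
  then obtain k where k: "j = Suc k" "k < n" by (cases j) auto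
  interpret finite_measure_subalgebra M "natural_filtration M zeta k"
    using k by (intro natural_filtration_subalgebra) auto
  have "AE \<omega> in M. real_cond_exp M (natural_filtration M zeta k) (zeta (Suc k)) \<omega> = zeta k \<omega>"
    using k by (intro real_cond_exp_charact set_integral_zeta_Suc integrable_zeta measurable_natural_filtration) auto
  then show "AE \<omega> in M. real_cond_exp M (natural_filtration M zeta (j - 1)) (zeta j) \<omega> = zeta (j - 1) \<omega>"
    using k by simp
qed


lemma phi_increment_moment_le:
  assumes k: "k < n" and q: "1 < q"
  shows "(\<integral>\<^sup>+ \<omega>. ennreal (\<bar>phi (Suc k) (t + X (Suc k) \<omega>) - phi k t\<bar> powr q) \<partial>M)
       \<le> ennreal (C_const q) * (\<integral>\<^sup>+ \<omega>. ennreal (norm (X (Suc k) \<omega> - z) powr q) \<partial>M)"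
proof -
  define g where "g \<omega> = phi (Suc k) (t + X (Suc k) \<omega>) - phi (Suc k) (t + z)" for \<omega>
  have g: "integrable M g" unfolding g_def using integrable_phi_Suc[OF k] by simp
  have "expectation g = phi k t - phi (Suc k) (t + z)"
    unfolding g_def using integrable_phi_Suc[OF k] phi_eq_expectation_phi_Suc[OF k] by (simp add: prob_space)
  then have "(\<integral>\<^sup>+ \<omega>. ennreal (\<bar>phi (Suc k) (t + X (Suc k) \<omega>) - phi k t\<bar> powr q) \<partial>M)
      = (\<integral>\<^sup>+ \<omega>. ennreal (\<bar>g \<omega> - expectation g\<bar> powr q) \<partial>M)"
    by (simp add: g_def)
  also have "\<dots> \<le> ennreal (C_const q) * (\<integral>\<^sup>+ \<omega>. ennreal (\<bar>g \<omega>\<bar> powr q) \<partial>M)"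
    by (rule nn_integral_central_moment_le[OF q g])
  also have "\<dots> \<le> ennreal (C_const q) * (\<integral>\<^sup>+ \<omega>. ennreal (norm (X (Suc k) \<omega> - z) powr q) \<partial>M)"
    using phi_lipschitz[of "Suc k" "t + X (Suc k) _" "t + z"] k q
    by (intro mult_left_mono nn_integral_mono ennreal_leI powr_mono2) (auto simp: g_def)
  finally show ?thesis .
qed

lemma set_increment_moment_le:
  assumes k: "k < n" and q: "1 < q" and A: "A \<in> sets (natural_filtration M zeta k)"
  shows "(\<integral>\<^sup>+ \<omega>. indicator A \<omega> * ennreal (\<bar>zeta (Suc k) \<omega> - zeta k \<omega>\<bar> powr q) \<partial>M)
       \<le> ennreal (C_const q) * (\<integral>\<^sup>+ \<omega>. ennreal (norm (X (Suc k) \<omega> - z) powr q) \<partial>M) * emeasure M A"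
proof -
  obtain B where [measurable]: "B \<in> sets (block_space {1..k})" and AB: "A = block {1..k} -` B \<inter> space M"
    using natural_filtration_set_eq_vimage[OF _ A] k by auto
  have [measurable]: "A \<in> sets M"
    using sets_natural_filtration_zeta[of k] A k by auto
  define E where "E = ennreal (C_const q) * (\<integral>\<^sup>+ \<omega>. ennreal (norm (X (Suc k) \<omega> - z) powr q) \<partial>M)"
  define f where "f = (\<lambda>(h, h'). indicator B h *
    ennreal (\<bar>phi (Suc k) ((\<Sum>l=1..k. h l) + h' (Suc k)) - phi k (\<Sum>l=1..k. h l)\<bar> powr q))"
  have f: "f \<in> borel_measurable (block_space {1..k} \<Otimes>\<^sub>M block_space {Suc k})"
    unfolding f_def by measurable
  have f_eq: "f (block {1..k} \<omega>, block {Suc k} \<omega>')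
      = indicator A \<omega> * ennreal (\<bar>phi (Suc k) (head k \<omega> + X (Suc k) \<omega>') - phi k (head k \<omega>)\<bar> powr q)"
    if "\<omega> \<in> space M" for \<omega> \<omega>'
    using that by (simp add: f_def AB indicator_def head_def)
  have "(\<integral>\<^sup>+ \<omega>. indicator A \<omega> * ennreal (\<bar>zeta (Suc k) \<omega> - zeta k \<omega>\<bar> powr q) \<partial>M)
      = (\<integral>\<^sup>+ \<omega>. f (block {1..k} \<omega>, block {Suc k} \<omega>) \<partial>M)"
    by (intro nn_integral_cong) (subst f_eq, simp_all add: zeta_def head_Suc)
  also have "\<dots> = (\<integral>\<^sup>+ \<omega>. \<integral>\<^sup>+ \<omega>'. f (block {1..k} \<omega>, block {Suc k} \<omega>') \<partial>M \<partial>M)"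
    by (rule nn_integral_indep_var[OF indep_head_block_next[OF k] f])
  also have "\<dots> \<le> (\<integral>\<^sup>+ \<omega>. indicator A \<omega> * E \<partial>M)"
  proof (intro nn_integral_mono)
    fix \<omega> assume \<omega>: "\<omega> \<in> space M"
    have "(\<integral>\<^sup>+ \<omega>'. f (block {1..k} \<omega>, block {Suc k} \<omega>') \<partial>M)
        = (\<integral>\<^sup>+ \<omega>'. indicator A \<omega> * ennreal (\<bar>phi (Suc k) (head k \<omega> + X (Suc k) \<omega>') - phi k (head k \<omega>)\<bar> powr q) \<partial>M)"
      by (intro nn_integral_cong f_eq \<omega>)
    also have "\<dots> = indicator A \<omega> * (\<integral>\<^sup>+ \<omega>'. ennreal (\<bar>phi (Suc k) (head k \<omega> + X (Suc k) \<omega>') - phi k (head k \<omega>)\<bar> powr q) \<partial>M)"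
      using k by (intro nn_integral_cmult) measurable
    also have "\<dots> \<le> indicator A \<omega> * E"
      unfolding E_def by (intro mult_left_mono phi_increment_moment_le k q) simp
    finally show "(\<integral>\<^sup>+ \<omega>'. f (block {1..k} \<omega>, block {Suc k} \<omega>') \<partial>M) \<le> indicator A \<omega> * E" .
  qed
  also have "\<dots> = E * emeasure M A"
    by (simp add: nn_integral_cmult_indicator mult.commute)
  finally show ?thesis unfolding E_def .
qed

lemma increment_moment_le:
  assumes "k < n" "1 < q"
  shows "(\<integral>\<^sup>+ \<omega>. ennreal (\<bar>zeta (Suc k) \<omega> - zeta k \<omega>\<bar> powr q) \<partial>M)
       \<le> ennreal (C_const q) * (\<integral>\<^sup>+ \<omega>. ennreal (norm (X (Suc k) \<omega> - z) powr q) \<partial>M)"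
proof -
  have "space M \<in> sets (natural_filtration M zeta k)"
    by (metis sets.top space_natural_filtration)
  from set_increment_moment_le[OF assms this] show ?thesis
    by (simp add: emeasure_space_1 cong: nn_integral_cong_simp)
qed


lemma esssup_cond_variance_le:
  assumes k: "k < n"
  shows "esssup M (nn_cond_exp M (natural_filtration M zeta k) (\<lambda>\<omega>. ennreal ((zeta (Suc k) \<omega> - zeta k \<omega>)\<^sup>2)))
       \<le> (\<integral>\<^sup>+ \<omega>. ennreal ((norm (X (Suc k) \<omega> - z))\<^sup>2) \<partial>M)"
proof -
  interpret finite_measure_subalgebra M "natural_filtration M zeta k"
    using k by (intro natural_filtration_subalgebra) auto
  show ?thesis
  proof (rule esssup_nn_cond_exp_le)
    have [measurable]: "zeta k \<in> borel_measurable M" "zeta (Suc k) \<in> borel_measurable M"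
      using k by auto
    show "(\<lambda>\<omega>. ennreal ((zeta (Suc k) \<omega> - zeta k \<omega>)\<^sup>2)) \<in> borel_measurable M"
      by measurable
    fix A assume "A \<in> sets (natural_filtration M zeta k)"
    from set_increment_moment_le[OF k _ this, of 2 z] show "(\<integral>\<^sup>+ \<omega>. indicator A \<omega> * ennreal ((zeta (Suc k) \<omega> - zeta k \<omega>)\<^sup>2) \<partial>M)
       \<le> (\<integral>\<^sup>+ \<omega>. ennreal ((norm (X (Suc k) \<omega> - z))\<^sup>2) \<partial>M) * emeasure M A"
      by (simp add: C_const_2)
  qed
qed


lemma sum_increment_moments_le:
  assumes "1 < q"
  shows "(\<Sum>i=1..n. \<integral>\<^sup>+ \<omega>. ennreal (\<bar>zeta i \<omega> - zeta (i - 1) \<omega>\<bar> powr q) \<partial>M)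
       \<le> ennreal (C_const q) * (\<Sum>i=1..n. \<integral>\<^sup>+ \<omega>. ennreal (norm (X i \<omega> - x i) powr q) \<partial>M)"
  unfolding sum_distrib_left
proof (intro sum_mono)
  fix i assume "i \<in> {1..n}"
  then obtain k where "i = Suc k" "k < n" by (cases i) auto
  with increment_moment_le[OF _ assms] show "(\<integral>\<^sup>+ \<omega>. ennreal (\<bar>zeta i \<omega> - zeta (i - 1) \<omega>\<bar> powr q) \<partial>M)
      \<le> ennreal (C_const q) * (\<integral>\<^sup>+ \<omega>. ennreal (norm (X i \<omega> - x i) powr q) \<partial>M)"
    by simp
qed

lemma sum_esssup_cond_variances_le:
  "(\<Sum>i=1..n. esssup M (nn_cond_exp M (natural_filtration M zeta (i - 1))
      (\<lambda>\<omega>. ennreal ((zeta i \<omega> - zeta (i - 1) \<omega>)\<^sup>2))))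
    \<le> (\<Sum>i=1..n. \<integral>\<^sup>+ \<omega>. ennreal ((norm (X i \<omega> - y i))\<^sup>2) \<partial>M)"
proof (intro sum_mono)
  fix i assume "i \<in> {1..n}"
  then obtain k where "i = Suc k" "k < n" by (cases i) auto
  with esssup_cond_variance_le show "esssup M (nn_cond_exp M (natural_filtration M zeta (i - 1))
      (\<lambda>\<omega>. ennreal ((zeta i \<omega> - zeta (i - 1) \<omega>)\<^sup>2)))
    \<le> (\<integral>\<^sup>+ \<omega>. ennreal ((norm (X i \<omega> - y i))\<^sup>2) \<partial>M)"
    by simp
qed

end

lemma enn_powr_mono: "a \<le> b \<Longrightarrow> 0 \<le> q \<Longrightarrow> enn_powr a q \<le> enn_powr b q"
  by (cases "b = \<infinity>")
     (auto simp: enn_powr_def top_unique less_top intro!: ennreal_leI powr_mono2 enn2real_mono)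

theorem corollary3p2:
  fixes p c1 c2 :: real
    and M :: "'a measure"
    and n :: nat
    and X :: "nat \<Rightarrow> 'a \<Rightarrow> 'b::{banach, second_countable_topology}"
    and x y :: "nat \<Rightarrow> 'b"
  assumes p: "2 \<le> p"
    and c1: "0 < c1" and c2: "0 < c2"
    and rosenthal: "\<And>(N :: 'a measure) (m :: nat) (\<zeta> :: nat \<Rightarrow> 'a \<Rightarrow> real).
        prob_space N \<Longrightarrow> real_martingale N m \<zeta> \<Longrightarrow> (\<forall>\<omega>\<in>space N. \<zeta> 0 \<omega> = 0) \<Longrightarrow>
        (\<integral>\<^sup>+ \<omega>. ennreal (\<bar>\<zeta> m \<omega>\<bar> powr p) \<partial>N)
          \<le> ennreal c1 * (\<Sum>i=1..m. \<integral>\<^sup>+ \<omega>. ennreal (\<bar>\<zeta> i \<omega> - \<zeta> (i - 1) \<omega>\<bar> powr p) \<partial>N)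
            + ennreal c2 * enn_powr
                (\<Sum>i=1..m. esssup N (nn_cond_exp N (natural_filtration N \<zeta> (i - 1))
                    (\<lambda>\<omega>. ennreal ((\<zeta> i \<omega> - \<zeta> (i - 1) \<omega>)\<^sup>2))))
                (p / 2)"
    and M: "prob_space M"
    and Xmeas: "\<And>i. i \<in> {1..n} \<Longrightarrow> X i \<in> borel_measurable M"
    and indep: "prob_space.indep_vars M (\<lambda>_. borel) X {1..n}"
    and Yint: "integrable M (\<lambda>\<omega>. norm (\<Sum>i=1..n. X i \<omega>))"
  shows "(\<integral>\<^sup>+ \<omega>. ennreal (\<bar>norm (\<Sum>i=1..n. X i \<omega>)
                    - prob_space.expectation M (\<lambda>\<omega>'. norm (\<Sum>i=1..n. X i \<omega>'))\<bar> powr p) \<partial>M)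
     \<le> ennreal (C_const p * c1) * (\<Sum>i=1..n. \<integral>\<^sup>+ \<omega>. ennreal (norm (X i \<omega> - x i) powr p) \<partial>M)
       + ennreal c2 * enn_powr (\<Sum>i=1..n. \<integral>\<^sup>+ \<omega>. ennreal ((norm (X i \<omega> - y i))\<^sup>2) \<partial>M) (p / 2)"
proof -
  interpret indep_banach_sum M n X
    using M Xmeas indep Yint by (intro indep_banach_sum.intro indep_banach_sum_axioms.intro)
  have "ennreal c1 * (\<Sum>i=1..n. \<integral>\<^sup>+ \<omega>. ennreal (\<bar>zeta i \<omega> - zeta (i - 1) \<omega>\<bar> powr p) \<partial>M)
      \<le> ennreal c1 * (ennreal (C_const p) * (\<Sum>i=1..n. \<integral>\<^sup>+ \<omega>. ennreal (norm (X i \<omega> - x i) powr p) \<partial>M))"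
    using p by (intro mult_left_mono sum_increment_moments_le) auto
  also have "\<dots> = ennreal (C_const p * c1) * (\<Sum>i=1..n. \<integral>\<^sup>+ \<omega>. ennreal (norm (X i \<omega> - x i) powr p) \<partial>M)"
    using C_const_ge_1[of p] p c1 by (simp add: ennreal_mult mult_ac)
  finally have moments: "ennreal c1 * (\<Sum>i=1..n. \<integral>\<^sup>+ \<omega>. ennreal (\<bar>zeta i \<omega> - zeta (i - 1) \<omega>\<bar> powr p) \<partial>M)
      \<le> ennreal (C_const p * c1) * (\<Sum>i=1..n. \<integral>\<^sup>+ \<omega>. ennreal (norm (X i \<omega> - x i) powr p) \<partial>M)" .
  have variances: "ennreal c2 * enn_powr (\<Sum>i=1..n. esssup M (nn_cond_exp M (natural_filtration M zeta (i - 1))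
        (\<lambda>\<omega>. ennreal ((zeta i \<omega> - zeta (i - 1) \<omega>)\<^sup>2)))) (p / 2)
      \<le> ennreal c2 * enn_powr (\<Sum>i=1..n. \<integral>\<^sup>+ \<omega>. ennreal ((norm (X i \<omega> - y i))\<^sup>2) \<partial>M) (p / 2)"
    using p by (intro mult_left_mono enn_powr_mono sum_esssup_cond_variances_le) auto
  have "(\<integral>\<^sup>+ \<omega>. ennreal (\<bar>zeta n \<omega>\<bar> powr p) \<partial>M)
      \<le> ennreal c1 * (\<Sum>i=1..n. \<integral>\<^sup>+ \<omega>. ennreal (\<bar>zeta i \<omega> - zeta (i - 1) \<omega>\<bar> powr p) \<partial>M)
        + ennreal c2 * enn_powr (\<Sum>i=1..n. esssup M (nn_cond_exp M (natural_filtration M zeta (i - 1))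
            (\<lambda>\<omega>. ennreal ((zeta i \<omega> - zeta (i - 1) \<omega>)\<^sup>2)))) (p / 2)"
    using zeta_0 by (intro rosenthal M real_martingale_zeta) simp
  from order.trans[OF this add_mono[OF moments variances]] show ?thesis
    by (simp add: zeta_n mean_norm_def)
qed

end
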